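(* Let $q(y,\eta)=(\eta-Ay)^2+\frac12 Vy\cdot y$, $(y,\eta)\in\mathbb{R}^{2n}$, where $A$ is a real $n\times n$ matrix and $V$ is a complex symmetric $n\times n$ matrix with $\mathrm{Re}\,V\geq 0$. Then the restriction of $q$ to its singular space $S$ is elliptic if and only if the matrix $V$ is invertible.
   Context: For a complex-valued quadratic form $q$ on $\mathbb{R}^{2n}_{y,\eta}$ with $\mathrm{Re}\,q\geq 0$, the singular space is $S=\{Y\in\mathbb{R}^{2n};\ H^k_{\mathrm{Im}\,q}\mathrm{Re}\,q(Y)=0\ \text{for all } k\in\mathbb{N}\}$, where for real $f\in C^1(\mathbb{R}^{2n})$, $H_f=f'_{\eta}\cdot\partial_y-f'_y\cdot\partial_{\eta}$ is its Hamilton vector field. The restriction of $q$ to $S$ is called elliptic if $Y\in S$, $q(Y)=0$ imply $Y=0$. *)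

theory Defs
  imports "HOL-Analysis.Analysis"
begin

text \<open>Hamilton vector field of a real C^1 function f, applied to a function g:
  H_f g = f'_eta . d_y g - f'_y . d_eta g, i.e. the derivative of g at Y in the
  direction (f'_eta(Y), - f'_y(Y)).\<close>
definition hamilton_field ::
  "((real^'n) \<times> (real^'n) \<Rightarrow> real) \<Rightarrow> ((real^'n) \<times> (real^'n) \<Rightarrow> real) \<Rightarrow> ((real^'n) \<times> (real^'n) \<Rightarrow> real)"
  where "hamilton_field f g = (\<lambda>Y.
     frechet_derivative g (at Y)
       ((\<chi> j. frechet_derivative f (at Y) (0, axis j 1)),
        (\<chi> j. - frechet_derivative f (at Y) (axis j 1, 0))))"

definition singular_space :: "((real^'n) \<times> (real^'n) \<Rightarrow> complex) \<Rightarrow> ((real^'n) \<times> (real^'n)) set"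
  where "singular_space q = {Y. \<forall>k::nat.
     ((hamilton_field (\<lambda>Z. Im (q Z)) ^^ k) (\<lambda>Z. Re (q Z))) Y = 0}"

definition elliptic_on_singular_space :: "((real^'n) \<times> (real^'n) \<Rightarrow> complex) \<Rightarrow> bool"
  where "elliptic_on_singular_space q \<longleftrightarrow>
     (\<forall>Y \<in> singular_space q. q Y = 0 \<longrightarrow> Y = 0)"

definition cvec :: "real^'n \<Rightarrow> complex^'n"
  where "cvec y = (\<chi> i. complex_of_real (y $ i))"

text \<open>q(y,eta) = (eta - A y)^2 + 1/2 V y . y  (bilinear, not sesquilinear).\<close>
definition qAV :: "real^'n^'n \<Rightarrow> complex^'n^'n \<Rightarrow> (real^'n) \<times> (real^'n) \<Rightarrow> complex"
  where "qAV A V = (\<lambda>(y, \<eta>).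
     complex_of_real ((\<eta> - A *v y) \<bullet> (\<eta> - A *v y))
     + (1/2) * (\<Sum>i\<in>UNIV. (V *v cvec y) $ i * cvec y $ i))"

definition Re_mat :: "complex^'n^'n \<Rightarrow> real^'n^'n"
  where "Re_mat V = (\<chi> i j. Re (V $ i $ j))"

end

theory Submission
  imports Defs
begin

text \<open>Write \<open>V = R + i W\<close> with \<open>R, W\<close> real symmetric and \<open>R \<ge> 0\<close>. Since
  \<open>Im q = W y \<cdot> y / 2\<close> depends on \<open>y\<close> only, \<open>H\<^bsub>Im q\<^esub> = - W y \<cdot> \<partial>\<^sub>\<eta>\<close>, and its
  iterates applied to \<open>Re q\<close> are \<open>-2 W y \<cdot> (\<eta> - A y)\<close>, \<open>2 \<bar>W y\<bar>\<^sup>2\<close> and then \<open>0\<close>.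
  Together with \<open>R \<ge> 0\<close> this gives \<open>S = {(y, A y). R y = 0, W y = 0}\<close>, on which
  \<open>q\<close> vanishes identically; so ellipticity means \<open>ker R \<inter> ker W = 0\<close>. For
  \<open>V z = 0\<close> with \<open>z = a + i b\<close>, the symmetry of \<open>W\<close> gives
  \<open>R a \<cdot> a + R b \<cdot> b = 0\<close>, hence \<open>a, b \<in> ker R \<inter> ker W\<close>; so this kernel condition is
  exactly the invertibility of \<open>V\<close>.\<close>

definition Im_mat :: "complex^'n^'n \<Rightarrow> real^'n^'n"
  where "Im_mat V = (\<chi> i j. Im (V $ i $ j))"

definition Re_vec :: "complex^'n \<Rightarrow> real^'n"
  where "Re_vec z = (\<chi> i. Re (z $ i))"

definition Im_vec :: "complex^'n \<Rightarrow> real^'n"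
  where "Im_vec z = (\<chi> i. Im (z $ i))"

lemma complex_vec_eq_0_iff: "z = 0 \<longleftrightarrow> Re_vec z = 0 \<and> Im_vec z = 0"
  by (auto simp: Re_vec_def Im_vec_def vec_eq_iff complex_eq_iff)

lemma cvec_nth: "cvec y $ i = complex_of_real (y $ i)"
  by (simp add: cvec_def)

lemma Re_vec_cvec [simp]: "Re_vec (cvec y) = y"
  and Im_vec_cvec [simp]: "Im_vec (cvec y) = 0"
  by (simp_all add: Re_vec_def Im_vec_def cvec_nth vec_eq_iff)

lemma Re_vec_matrix_vector_mult:
  "Re_vec (V *v z) = Re_mat V *v Re_vec z - Im_mat V *v Im_vec z"
  by (simp add: vec_eq_iff matrix_vector_mult_def Re_vec_def Im_vec_def Re_mat_def Im_mat_def
      Re_sum sum_subtractf)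

lemma Im_vec_matrix_vector_mult:
  "Im_vec (V *v z) = Re_mat V *v Im_vec z + Im_mat V *v Re_vec z"
  by (simp add: vec_eq_iff matrix_vector_mult_def Re_vec_def Im_vec_def Re_mat_def Im_mat_def
      Im_sum sum.distrib)

lemma transpose_Re_mat: "transpose (Re_mat V) = Re_mat (transpose V)"
  and transpose_Im_mat: "transpose (Im_mat V) = Im_mat (transpose V)"
  by (simp_all add: vec_eq_iff transpose_def Re_mat_def Im_mat_def)

lemma Re_bilinear_cvec:
  "Re (\<Sum>i\<in>UNIV. (V *v cvec y) $ i * cvec y $ i) = y \<bullet> (Re_mat V *v y)"
proof -
  have "Re (\<Sum>i\<in>UNIV. (V *v cvec y) $ i * cvec y $ i) = Re_vec (V *v cvec y) \<bullet> y"
    by (simp add: Re_sum inner_vec_def Re_vec_def cvec_nth)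
  also have "\<dots> = y \<bullet> (Re_mat V *v y)"
    by (simp add: Re_vec_matrix_vector_mult inner_commute)
  finally show ?thesis .
qed

lemma Im_bilinear_cvec:
  "Im (\<Sum>i\<in>UNIV. (V *v cvec y) $ i * cvec y $ i) = y \<bullet> (Im_mat V *v y)"
proof -
  have "Im (\<Sum>i\<in>UNIV. (V *v cvec y) $ i * cvec y $ i) = Im_vec (V *v cvec y) \<bullet> y"
    by (simp add: Im_sum inner_vec_def Im_vec_def cvec_nth)
  also have "\<dots> = y \<bullet> (Im_mat V *v y)"
    by (simp add: Im_vec_matrix_vector_mult inner_commute)
  finally show ?thesis .
qed

lemma Re_qAV: "Re (qAV A V (y, \<eta>)) = (\<eta> - A *v y) \<bullet> (\<eta> - A *v y) + 1/2 * (y \<bullet> (Re_mat V *v y))"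
  by (simp add: qAV_def Re_bilinear_cvec del: Re_sum)

lemma Im_qAV: "Im (qAV A V (y, \<eta>)) = 1/2 * (y \<bullet> (Im_mat V *v y))"
  by (simp add: qAV_def Im_bilinear_cvec del: Im_sum)

lemma symmetric_matrix_inner_commute:
  assumes "transpose M = M"
  shows "x \<bullet> ((M::real^'n^'n) *v y) = y \<bullet> (M *v x)"
  by (metis assms dot_lmul_matrix inner_commute transpose_matrix_vector)

lemma psd_quadratic_form_eq_0_imp_kernel:
  fixes R :: "real^'n^'n"
  assumes psd: "\<forall>x. 0 \<le> x \<bullet> (R *v x)" and sym: "transpose R = R"
    and y: "y \<bullet> (R *v y) = 0"
  shows "R *v y = 0"
proof (rule ccontr)
  define z where "z = R *v y"
  assume "R *v y \<noteq> 0"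
  then have "z \<bullet> z > 0" by (simp add: z_def)
  have "(t *\<^sub>R y - z) \<bullet> (R *v (t *\<^sub>R y - z)) = z \<bullet> (R *v z) - 2 * t * (z \<bullet> z)" for t
    using symmetric_matrix_inner_commute[OF sym, of y z] y
    by (simp add: z_def matrix_vector_mult_diff_distrib matrix_vector_mult_scaleR
        inner_diff_left inner_diff_right algebra_simps)
  then have "2 * t * (z \<bullet> z) \<le> z \<bullet> (R *v z)" for t
    using psd by (metis diff_ge_0_iff_ge)
  from this[of "(z \<bullet> (R *v z) + 1) / (2 * (z \<bullet> z))"] show False
    using \<open>z \<bullet> z > 0\<close> by simp
qed

lemma invertible_iff_Re_Im_kernels_trivial:
  fixes V :: "complex^'n^'n"
  assumes sym: "transpose V = V" and psd: "\<forall>x. 0 \<le> x \<bullet> (Re_mat V *v x)"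
  shows "invertible V \<longleftrightarrow> (\<forall>y. Re_mat V *v y = 0 \<and> Im_mat V *v y = 0 \<longrightarrow> y = 0)"
proof -
  let ?R = "Re_mat V" and ?W = "Im_mat V"
  have symR: "transpose ?R = ?R" and symW: "transpose ?W = ?W"
    using sym by (simp_all add: transpose_Re_mat transpose_Im_mat)
  show ?thesis
    unfolding invertible_left_inverse matrix_left_invertible_ker
  proof safe
    fix y assume ker: "\<forall>z. V *v z = 0 \<longrightarrow> z = 0" "?R *v y = 0" "?W *v y = 0"
    have "V *v cvec y = 0"
      using ker by (simp add: complex_vec_eq_0_iff Re_vec_matrix_vector_mult Im_vec_matrix_vector_mult)
    with ker show "y = 0"
      by (metis Re_vec_cvec complex_vec_eq_0_iff)
  next
    fix z assume ker: "\<forall>y. ?R *v y = 0 \<and> ?W *v y = 0 \<longrightarrow> y = 0" and "V *v z = 0"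
    define a b where "a = Re_vec z" and "b = Im_vec z"
    have e1: "?R *v a = ?W *v b" and e2: "?R *v b = - (?W *v a)"
      using \<open>V *v z = 0\<close> unfolding a_def b_def complex_vec_eq_0_iff
      by (simp_all add: Re_vec_matrix_vector_mult Im_vec_matrix_vector_mult eq_neg_iff_add_eq_0)
    have "a \<bullet> (?R *v a) + b \<bullet> (?R *v b) = 0"
      using symmetric_matrix_inner_commute[OF symW, of a b] unfolding e1 e2 by (simp add: inner_minus_right)
    then have "a \<bullet> (?R *v a) = 0" "b \<bullet> (?R *v b) = 0"
      using psd by (simp_all add: add_nonneg_eq_0_iff)
    then have "?R *v a = 0" "?R *v b = 0"
      using psd_quadratic_form_eq_0_imp_kernel[OF psd symR] by blast+
    then have "a = 0" "b = 0"
      using ker e1 e2 by (metis neg_equal_0_iff_equal)+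
    then show "z = 0"
      by (simp add: complex_vec_eq_0_iff a_def b_def)
  qed
qed

lemma hamilton_field_position_quadratic:
  fixes W :: "real^'n^'n"
  assumes sym: "transpose W = W"
  shows "hamilton_field (\<lambda>Z. 1/2 * (fst Z \<bullet> (W *v fst Z))) g
           = (\<lambda>Y. frechet_derivative g (at Y) (0, - (W *v fst Y)))"
proof -
  have "((\<lambda>Z. 1/2 * (fst Z \<bullet> (W *v fst Z))) has_derivative
         (\<lambda>h. 1/2 * (fst h \<bullet> (W *v fst Y) + fst Y \<bullet> (W *v fst h)))) (at Y)" for Y
    by (auto intro!: derivative_eq_intros bounded_linear.has_derivative[OF matrix_vector_mul_bounded_linear])
  note derivative = frechet_derivative_at[OF this, symmetric]
  have neg_vec: "(\<chi> j. - (x::real^'n) $ j) = - x" for x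
    by (simp add: vec_eq_iff)
  show ?thesis
    unfolding hamilton_field_def derivative
    by (auto simp: vec_eq_iff symmetric_matrix_inner_commute[OF sym, of _ "axis _ 1"] inner_axis'
        zero_vec_def[symmetric] neg_vec intro!: ext)
qed

lemma Im_qAV_eq: "(\<lambda>Z. Im (qAV A V Z)) = (\<lambda>Z. 1/2 * (fst Z \<bullet> (Im_mat V *v fst Z)))"
  by (auto simp: Im_qAV)

lemma Re_qAV_eq: "(\<lambda>Z. Re (qAV A V Z))
    = (\<lambda>Z. (snd Z - A *v fst Z) \<bullet> (snd Z - A *v fst Z) + 1/2 * (fst Z \<bullet> (Re_mat V *v fst Z)))"
  by (auto simp: Re_qAV)

lemma
  fixes A :: "real^'n^'n" and V :: "complex^'n^'n"
  assumes "transpose (Im_mat V) = Im_mat V"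
  defines "H \<equiv> hamilton_field (\<lambda>Z. Im (qAV A V Z))" and "W \<equiv> Im_mat V"
  shows hamilton_field_Re_qAV:
      "H (\<lambda>Z. Re (qAV A V Z)) = (\<lambda>Z. -2 * ((W *v fst Z) \<bullet> (snd Z - A *v fst Z)))"
    and hamilton_field_twice_Re_qAV:
      "H (H (\<lambda>Z. Re (qAV A V Z))) = (\<lambda>Z. 2 * ((W *v fst Z) \<bullet> (W *v fst Z)))"
    and hamilton_field_funpow_Re_qAV:
      "(H ^^ (k + 3)) (\<lambda>Z. Re (qAV A V Z)) = (\<lambda>_. 0)"
proof -
  have H: "H g = (\<lambda>Y. frechet_derivative g (at Y) (0, - (W *v fst Y)))" for g
    unfolding H_def W_def Im_qAV_eq using hamilton_field_position_quadratic[OF assms(1)] .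
  have fst_linear: "((\<lambda>Z. M *v fst Z) has_derivative (\<lambda>h. M *v fst h)) (at Y)" for M :: "real^'n^'n" and Y
    by (rule bounded_linear.has_derivative[OF matrix_vector_mul_bounded_linear has_derivative_fst[OF has_derivative_ident]])
  have H_deriv: "H g = (\<lambda>Y. D Y (0, - (W *v fst Y)))"
    if "\<And>Y. (g has_derivative D Y) (at Y)" for g D
    unfolding H using frechet_derivative_at[OF that] by metis
  have dRe: "((\<lambda>Z. (snd Z - A *v fst Z) \<bullet> (snd Z - A *v fst Z) + 1/2 * (fst Z \<bullet> (Re_mat V *v fst Z)))
        has_derivative (\<lambda>h. 2 * ((snd h - A *v fst h) \<bullet> (snd Y - A *v fst Y))
          + 1/2 * (fst h \<bullet> (Re_mat V *v fst Y) + fst Y \<bullet> (Re_mat V *v fst h)))) (at Y)" for Y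
    by (auto intro!: derivative_eq_intros fst_linear simp: inner_commute)
  show H1: "H (\<lambda>Z. Re (qAV A V Z)) = (\<lambda>Z. -2 * ((W *v fst Z) \<bullet> (snd Z - A *v fst Z)))"
    unfolding Re_qAV_eq H_deriv[OF dRe] by simp
  have dH1: "((\<lambda>Z. -2 * ((W *v fst Z) \<bullet> (snd Z - A *v fst Z))) has_derivative
        (\<lambda>h. -2 * ((W *v fst h) \<bullet> (snd Y - A *v fst Y) + (W *v fst Y) \<bullet> (snd h - A *v fst h)))) (at Y)" for Y
    by (auto intro!: derivative_eq_intros fst_linear)
  show H2: "H (H (\<lambda>Z. Re (qAV A V Z))) = (\<lambda>Z. 2 * ((W *v fst Z) \<bullet> (W *v fst Z)))"
    unfolding H1 H_deriv[OF dH1] by simp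
  have dH2: "((\<lambda>Z. 2 * ((W *v fst Z) \<bullet> (W *v fst Z))) has_derivative
        (\<lambda>h. 2 * ((W *v fst h) \<bullet> (W *v fst Y) + (W *v fst Y) \<bullet> (W *v fst h)))) (at Y)" for Y
    by (auto intro!: derivative_eq_intros fst_linear)
  have H3: "H (\<lambda>Z. 2 * ((W *v fst Z) \<bullet> (W *v fst Z))) = (\<lambda>_. 0)"
    unfolding H_deriv[OF dH2] by simp
  have H_zero: "H (\<lambda>_. 0) = (\<lambda>_. 0)"
    using H_deriv[of "\<lambda>_. 0" "\<lambda>_ _. 0"] by simp
  show "(H ^^ (k + 3)) (\<lambda>Z. Re (qAV A V Z)) = (\<lambda>_. 0)"
  proof (induction k)
    case 0
    have "(H ^^ 3) (\<lambda>Z. Re (qAV A V Z)) = H (H (H (\<lambda>Z. Re (qAV A V Z))))"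
      by (simp add: numeral_3_eq_3)
    then show ?case
      by (simp only: add_0 H2 H3)
  next
    case (Suc k)
    then show ?case
      by (simp only: add_Suc funpow.simps comp_apply H_zero)
  qed
qed

lemma singular_space_qAV:
  fixes A :: "real^'n^'n" and V :: "complex^'n^'n"
  assumes sym: "transpose V = V" and psd: "\<forall>x. 0 \<le> x \<bullet> (Re_mat V *v x)"
  shows "singular_space (qAV A V) = {(y, A *v y) | y. Re_mat V *v y = 0 \<and> Im_mat V *v y = 0}"
proof -
  let ?H = "hamilton_field (\<lambda>Z. Im (qAV A V Z))" and ?f = "\<lambda>Z. Re (qAV A V Z)"
  have symR: "transpose (Re_mat V) = Re_mat V" and symW: "transpose (Im_mat V) = Im_mat V"
    using sym by (simp_all add: transpose_Re_mat transpose_Im_mat)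
  show ?thesis
  proof (rule set_eqI)
    fix Y :: "(real^'n) \<times> (real^'n)"
    obtain y \<eta> where Y: "Y = (y, \<eta>)" by fastforce
    have "(?H ^^ k) ?f Y = 0" if "\<forall>k<3. (?H ^^ k) ?f Y = 0" for k
      using that hamilton_field_funpow_Re_qAV[OF symW, of "k - 3"] by (cases "k < 3") auto
    then have "Y \<in> singular_space (qAV A V) \<longleftrightarrow> (\<forall>k<3. (?H ^^ k) ?f Y = 0)"
      unfolding singular_space_def by blast
    then have iterates: "Y \<in> singular_space (qAV A V) \<longleftrightarrow> ?f Y = 0 \<and> ?H ?f Y = 0 \<and> ?H (?H ?f) Y = 0"
      by (simp add: All_less_Suc numeral_3_eq_3 conj_commute conj_left_commute)
    have "?f Y = 0 \<longleftrightarrow> \<eta> - A *v y = 0 \<and> y \<bullet> (Re_mat V *v y) = 0"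
      using psd[rule_format, of y] by (simp add: Y Re_qAV add_nonneg_eq_0_iff)
    also have "\<dots> \<longleftrightarrow> \<eta> = A *v y \<and> Re_mat V *v y = 0"
      using psd_quadratic_form_eq_0_imp_kernel[OF psd symR, of y] by auto
    finally have "?f Y = 0 \<longleftrightarrow> \<eta> = A *v y \<and> Re_mat V *v y = 0" .
    moreover have "?H (?H ?f) Y = 0 \<longleftrightarrow> Im_mat V *v y = 0"
      by (simp add: Y hamilton_field_twice_Re_qAV[OF symW])
    moreover have "?H ?f Y = 0" if "Im_mat V *v y = 0"
      using that by (simp add: Y hamilton_field_Re_qAV[OF symW])
    ultimately show "Y \<in> singular_space (qAV A V) \<longleftrightarrow> Y \<in> {(y, A *v y) | y. Re_mat V *v y = 0 \<and> Im_mat V *v y = 0}"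
      unfolding iterates by (auto simp: Y)
  qed
qed

theorem lemma2p2:
  fixes A :: "real^'n^'n" and V :: "complex^'n^'n"
  assumes "transpose V = V"
    and "\<forall>y::real^'n. 0 \<le> y \<bullet> (Re_mat V *v y)"
  shows "elliptic_on_singular_space (qAV A V) \<longleftrightarrow> invertible V"
proof -
  let ?K = "\<lambda>y. Re_mat V *v y = 0 \<and> Im_mat V *v y = 0"
  have "qAV A V (y, A *v y) = 0" if "?K y" for y
    using that by (simp add: complex_eq_iff Re_qAV Im_qAV)
  then have "elliptic_on_singular_space (qAV A V) \<longleftrightarrow> (\<forall>y. ?K y \<longrightarrow> (y, A *v y) = 0)"
    unfolding elliptic_on_singular_space_def singular_space_qAV[OF assms] by blast
  also have "\<dots> \<longleftrightarrow> (\<forall>y. ?K y \<longrightarrow> y = 0)"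
    by (simp add: zero_prod_def) (metis matrix_vector_mult_0_right)
  also have "\<dots> \<longleftrightarrow> invertible V"
    using invertible_iff_Re_Im_kernels_trivial[OF assms] by simp
  finally show ?thesis .
qed

end
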